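(* Let $\mathcal{A}=\mathcal{A}_1+\dots+\mathcal{A}_R$ be a structured block term decomposition in $\mathbb{R}^{n_1\times\dots\times n_D}$, with $\mathcal{A}_r\in\mathcal{M}_r^{n_1,\dots,n_D}$ for Tucker core structures $\mathcal{M}_r\subseteq\mathbb{R}^{l_1^r\times\dots\times l_D^r}$, and with each $\mathcal{A}_r=(U_1^r,\dots,U_D^r)\cdot\mathcal{C}_r$ in compact HOSVD form. Assume that $(U_d^{r_1})^TU_d^{r_2}=0$ for every $d=1,\dots,D$ and every $r_1\neq r_2$. Then $\kappa^{\mathrm{SBTD}}(\mathcal{A}_1,\dots,\mathcal{A}_R)=1$.
   Context: For matrices $A_d\in\mathbb{R}^{k_d\times l_d}$ and $\mathcal{C}=(c_{i_1\dots i_D})$, $(A_1,\dots,A_D)\cdot\mathcal{C}:=\sum c_{i_1\dots i_D}(A_1e_{i_1})\otimes\dots\otimes(A_De_{i_D})$. $\mathbb{R}^{n\times l}_\star$ denotes real $n\times l$ matrices of rank $l$. A Tucker core structure is a smooth submanifold $\mathcal{M}\subseteq\mathbb{R}^{l_1\times\dots\times l_D}$ such that every $\mathcal{C}\in\mathcal{M}$ has multilinear rank $(l_1,\dots,l_D)$ and $(A_1,\dots,A_D)\cdot\mathcal{C}\in\mathcal{M}$ for all $A_d\in\mathrm{GL}(l_d)$. Its structured Tucker manifold is $\mathcal{M}^{n_1,\dots,n_D}:=\{(U_1,\dots,U_D)\cdot\mathcal{C}:\mathcal{C}\in\mathcal{M},U_d\in\mathbb{R}^{n_d\times l_d}_\star\}$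 (a smooth embedded submanifold of $\mathbb{R}^{n_1\times\dots\times n_D}$). A compact HOSVD of $\mathcal{X}$ is $\mathcal{X}=(U_1,\dots,U_D)\cdot\mathcal{C}$ with each $U_d$ having orthonormal columns that are left singular vectors of the $d$-th unfolding $\mathcal{X}_{(d)}$ for its nonzero singular values, and $\mathcal{C}=(U_1^T,\dots,U_D^T)\cdot\mathcal{X}$. Condition number: for $\mathcal{A}_r\in\mathcal{M}_r^{n_1,\dots,n_D}$, let $T_r$ be a matrix whose columns form an orthonormal basis of the (vectorized) tangent space $T_{\mathcal{A}_r}\mathcal{M}_r^{n_1,\dots,n_D}$, and let the Terracini matrix be $T=[T_1\ \cdots\ T_R]$ with $N$ columns. Then $\kappa^{\mathrm{SBTD}}(\mathcal{A}_1,\dots,\mathcal{A}_R):=1/\sigma_N(T)$, where $\sigma_N(T)$ is the $N$-th largest singular value (taken to be $0$ if $N$ exceeds the number of rows), and $1/0=\infty$. (This equals the condition number of the local inverse of the addition map $(\mathcal{A}_1,\dots,\mathcal{A}_R)\mapsto\sum_r\mathcal{A}_r$.) *)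

theory Defs
  imports "HOL-Analysis.Analysis"
begin

text \<open>All tensors of order D live in one ambient Euclidean space
  real^('d => 'i), where the finite type 'd indexes the D modes (D = CARD('d)) and
  the finite type 'i is a pool of row/column indices.  A tensor of shape
  n_1 x ... x n_D is an element supported on the box of index sets I d (card (I d) = n_d).
  Matrices are elements of real^'i^'i supported on a rectangle of index sets.\<close>

type_synonym ('d, 'i) tensor = "real ^ ('d \<Rightarrow> 'i)"

text \<open>Tensors supported on the box prod_d J d, i.e. the space R^(card J_1 x ... x card J_D).\<close>
definition box_space :: "('d::finite \<Rightarrow> 'i::finite set) \<Rightarrow> ('d, 'i) tensor set" where
  "box_space J = {X. \<forall>g. X $ g \<noteq> 0 \<longrightarrow> (\<forall>d. g d \<in> J d)}"

text \<open>Matrix supported on rows K and columns L (an element of R^(card K x card L)).\<close>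
definition mat_on :: "'i::finite set \<Rightarrow> 'i set \<Rightarrow> real^'i^'i \<Rightarrow> bool" where
  "mat_on K L A \<longleftrightarrow> (\<forall>i j. A $ i $ j \<noteq> 0 \<longrightarrow> i \<in> K \<and> j \<in> L)"

definition full_rank_mat :: "'i::finite set \<Rightarrow> 'i set \<Rightarrow> real^'i^'i \<Rightarrow> bool" where
  "full_rank_mat K L A \<longleftrightarrow> mat_on K L A \<and> rank A = card L"

definition gl_mat :: "'i::finite set \<Rightarrow> real^'i^'i \<Rightarrow> bool" where
  "gl_mat L A \<longleftrightarrow> mat_on L L A \<and> rank A = card L"

definition mlprod :: "('d::finite \<Rightarrow> real^'i::finite^'i) \<Rightarrow> ('d, 'i) tensor \<Rightarrow> ('d, 'i) tensor" where
  "mlprod A X = (\<chi> f. \<Sum>g\<in>UNIV. X $ g * (\<Prod>d\<in>UNIV. A d $ (f d) $ (g d)))"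

text \<open>d-th component of the multilinear rank: rank of the mode-d unfolding X_(d),
  i.e. dimension of the span of its columns (the mode-d fibres).\<close>
definition mlrank :: "('d::finite, 'i::finite) tensor \<Rightarrow> 'd \<Rightarrow> nat" where
  "mlrank X d = dim (span {(\<chi> i. X $ (g(d := i))) | g. True})"

text \<open>Gram matrix X_(d) X_(d)^T of the mode-d unfolding.\<close>
definition unfold_gram :: "('d::finite, 'i::finite) tensor \<Rightarrow> 'd \<Rightarrow> real^'i^'i" where
  "unfold_gram X d = (\<chi> i j. \<Sum>g\<in>{g. g d = i}. X $ g * X $ (g(d := j)))"

definition id_on :: "'i::finite set \<Rightarrow> real^'i^'i" where
  "id_on L = (\<chi> i j. if i = j \<and> i \<in> L then 1 else 0)"

text \<open>Compact HOSVD X = (U_1,...,U_D) . C of a tensor X of shape I, with U_d of size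
  n_d x l_d (rows I d, columns L d): orthonormal columns, each column a left singular
  vector of X_(d) for a nonzero singular value (unit eigenvector of X_(d) X_(d)^T with
  positive eigenvalue), and C = (U_1^T,...,U_D^T) . X.\<close>
definition compact_hosvd ::
  "('d::finite \<Rightarrow> 'i::finite set) \<Rightarrow> ('d \<Rightarrow> 'i set) \<Rightarrow> ('d \<Rightarrow> real^'i^'i)
     \<Rightarrow> ('d, 'i) tensor \<Rightarrow> ('d, 'i) tensor \<Rightarrow> bool" where
  "compact_hosvd I L U C X \<longleftrightarrow>
     (\<forall>d. mat_on (I d) (L d) (U d)
        \<and> transpose (U d) ** U d = id_on (L d)
        \<and> (\<forall>j\<in>L d. \<exists>s>0. unfold_gram X d *v column j (U d) = s *\<^sub>R column j (U d)))
     \<and> X = mlprod U C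
     \<and> C = mlprod (\<lambda>d. transpose (U d)) X"

text \<open>C-infinity maps on an open set: all iterated Frechet derivatives exist.
  Df vs x is the iterated derivative in directions vs at x.\<close>
definition smooth_on :: "'a::real_normed_vector set \<Rightarrow> ('a \<Rightarrow> 'b::real_normed_vector) \<Rightarrow> bool" where
  "smooth_on U f \<longleftrightarrow> open U \<and>
     (\<exists>Df :: 'a list \<Rightarrow> 'a \<Rightarrow> 'b.
        (\<forall>x\<in>U. Df [] x = f x) \<and>
        (\<forall>vs. \<forall>x\<in>U. (Df vs has_derivative (\<lambda>h. Df (h # vs) x)) (at x)))"

text \<open>Smooth embedded submanifold (slice-chart definition).\<close>
definition smooth_submanifold :: "'a::euclidean_space set \<Rightarrow> bool" where
  "smooth_submanifold M \<longleftrightarrow>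
     (\<forall>p\<in>M. \<exists>W W' (\<psi>::'a \<Rightarrow> 'a) S.
        open W \<and> p \<in> W \<and> open W' \<and> bij_betw \<psi> W W' \<and>
        smooth_on W \<psi> \<and> smooth_on W' (inv_into W \<psi>) \<and>
        subspace S \<and> \<psi> ` (M \<inter> W) = W' \<inter> S)"

definition tangent_space :: "'a::euclidean_space set \<Rightarrow> 'a \<Rightarrow> 'a set" where
  "tangent_space M p = {v. \<exists>(\<gamma>::real \<Rightarrow> 'a) e. e > 0 \<and> smooth_on {-e<..<e} \<gamma> \<and>
       \<gamma> ` {-e<..<e} \<subseteq> M \<and> \<gamma> 0 = p \<and> (\<gamma> has_vector_derivative v) (at 0)}"

text \<open>Tucker core structure M in R^(l_1 x ... x l_D), l_d = card (L d).\<close>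
definition tucker_core_structure :: "('d::finite \<Rightarrow> 'i::finite set) \<Rightarrow> ('d, 'i) tensor set \<Rightarrow> bool" where
  "tucker_core_structure L M \<longleftrightarrow>
     M \<subseteq> box_space L \<and> smooth_submanifold M \<and>
     (\<forall>C\<in>M. \<forall>d. mlrank C d = card (L d)) \<and>
     (\<forall>C\<in>M. \<forall>A. (\<forall>d. gl_mat (L d) (A d)) \<longrightarrow> mlprod A C \<in> M)"

definition structured_tucker ::
  "('d::finite, 'i::finite) tensor set \<Rightarrow> ('d \<Rightarrow> 'i set) \<Rightarrow> ('d \<Rightarrow> 'i set) \<Rightarrow> ('d, 'i) tensor set" where
  "structured_tucker M L I =
     {mlprod U C | U C. C \<in> M \<and> (\<forall>d. full_rank_mat (I d) (L d) (U d))}"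

text \<open>Smallest singular value sigma_N of the Terracini matrix T = [T_1 ... T_R], T_r having
  orthonormal columns spanning the r-th tangent space TS r:
  sigma_N(T) = min over unit coefficient vectors x = (x_1..x_R) of norm (sum_r T_r x_r);
  writing v_r = T_r x_r (so norm v_r = norm x_r) this is the infimum below
  (it is automatically 0 when N exceeds the number of rows).\<close>
definition terracini_sigma_min :: "nat \<Rightarrow> (nat \<Rightarrow> 'a::euclidean_space set) \<Rightarrow> real" where
  "terracini_sigma_min R TS =
     Inf {norm (\<Sum>r<R. v r) | v. (\<forall>r<R. v r \<in> TS r) \<and> (\<Sum>r<R. (norm (v r))\<^sup>2) = 1}"

text \<open>kappa^SBTD = 1 / sigma_N(T), with 1/0 = infinity.\<close>
definition kappa_sbtd :: "nat \<Rightarrow> (nat \<Rightarrow> 'a::euclidean_space set) \<Rightarrow> ereal" where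
  "kappa_sbtd R TS =
     (if terracini_sigma_min R TS = 0 then \<infinity> else ereal (1 / terracini_sigma_min R TS))"

end

theory Submission
  imports Defs
begin

(* Let A = (U_1,...,U_D) . C be a compact HOSVD and let P_d = U_d U_d^T and Q_d = I - P_d act on
   mode d.  Every tangent vector v at A satisfies Q_d Q_d' v = 0 for d ~= d': along a curve gamma in
   the manifold, the mode-d fibres of gamma(t) span a space of dimension at most l_d containing a
   frame that starts at the columns of U_d, and the mode-d fibres of Q_d' gamma(t) vanish at t = 0.
   If the U_d of two terms are orthogonal in every mode and D >= 3, two tensors v, w with this
   property are orthogonal: expanding v = P_a v + P_b v - P_a P_b v, and once more with a third
   mode, writes v as a sum of terms P_x P_y z with x ~= y, and
   <P_x P_y z, w> = <z, P_y P_x Q'_y Q'_x w> = 0 because P_x = P_x Q'_x.  Hence the tangent spaces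
   are mutually orthogonal and Pythagoras gives sigma_N = 1. *)

section \<open>Velocities of curves in moving subspaces\<close>

lemma has_real_derivative_eq_0_if_quadratic_bound:
  fixes g :: "real \<Rightarrow> real"
  assumes "(g has_real_derivative D) (at 0)" and "g 0 = 0"
    and "eventually (\<lambda>t. \<bar>g t\<bar> \<le> c * t\<^sup>2) (at 0)"
  shows "D = 0"
proof -
  have "((\<lambda>t. g t / t) \<longlongrightarrow> D) (at 0)"
    using assms(1,2) by (simp add: has_field_derivative_iff)
  moreover have "eventually (\<lambda>t. norm (g t / t) \<le> c * \<bar>t\<bar>) (at 0)"
    using assms(3) eventually_neq_at_within[of 0 0 UNIV]
  proof eventually_elim
    case (elim t)
    then show ?case by (simp add: divide_le_eq power2_eq_square abs_mult)
  qed
  then have "((\<lambda>t. g t / t) \<longlongrightarrow> 0) (at 0)"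
    by (rule Lim_null_comparison) (auto intro!: tendsto_eq_intros)
  ultimately show ?thesis
    using tendsto_unique[OF at_neq_bot] by blast
qed

lemma has_vector_derivative_imp_eventually_norm_diff_le:
  assumes "(f has_vector_derivative f') (at 0)"
  shows "eventually (\<lambda>t. norm (f t - f 0) \<le> (norm f' + 1) * \<bar>t\<bar>) (at 0)"
proof -
  obtain d where "d > 0"
    and d: "\<forall>t. norm (t - 0) < d \<longrightarrow> norm (f t - f 0 - (t - 0) *\<^sub>R f') \<le> 1 * norm (t - 0)"
    using assms unfolding has_vector_derivative_def has_derivative_at_alt by (meson zero_less_one)
  have "norm (f t - f 0) \<le> (norm f' + 1) * \<bar>t\<bar>" if "\<bar>t\<bar> < d" for t
    using d that norm_triangle_sub[of "f t - f 0" "t *\<^sub>R f'"] by (auto simp: algebra_simps)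
  then show ?thesis
    unfolding eventually_at using \<open>d > 0\<close> by (auto simp: dist_real_def)
qed

lemma eventually_uniform_norm_diff_le:
  assumes "finite J" and "\<forall>j\<in>J. (f j has_vector_derivative f' j) (at 0)"
  obtains K where "K \<ge> 0" and "eventually (\<lambda>t. \<forall>j\<in>J. norm (f j t - f j 0) \<le> K * \<bar>t\<bar>) (at 0)"
proof
  let ?K = "\<Sum>j\<in>J. norm (f' j) + 1"
  show "?K \<ge> 0" by (simp add: sum_nonneg add_nonneg_nonneg)
  have K_ge: "norm (f' j) + 1 \<le> ?K" if "j \<in> J" for j
    using assms(1) that by (intro member_le_sum) auto
  then have "\<forall>j\<in>J. eventually (\<lambda>t. norm (f j t - f j 0) \<le> ?K * \<bar>t\<bar>) (at 0)"
  proof (intro ballI)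
    fix j assume "j \<in> J"
    with assms(2) have "eventually (\<lambda>t. norm (f j t - f j 0) \<le> (norm (f' j) + 1) * \<bar>t\<bar>) (at 0)"
      by (blast intro: has_vector_derivative_imp_eventually_norm_diff_le)
    then show "eventually (\<lambda>t. norm (f j t - f j 0) \<le> ?K * \<bar>t\<bar>) (at 0)"
      by eventually_elim (use \<open>j \<in> J\<close> K_ge in \<open>meson abs_ge_zero mult_right_mono order_trans\<close>)
  qed
  then show "eventually (\<lambda>t. \<forall>j\<in>J. norm (f j t - f j 0) \<le> ?K * \<bar>t\<bar>) (at 0)"
    using assms(1) by (rule eventually_ball_finite[rotated])
qed

lemma linear_has_vector_derivative:
  fixes f :: "'a::euclidean_space \<Rightarrow> 'b::real_normed_vector"
  assumes "linear f" and "(\<gamma> has_vector_derivative v) F"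
  shows "((\<lambda>t. f (\<gamma> t)) has_vector_derivative f v) F"
  using assms(2) by (rule bounded_linear.has_vector_derivative[OF assms(1)[unfolded linear_conv_bounded_linear]])

lemma smooth_on_line:
  fixes p q :: "'a::real_normed_vector"
  assumes "open S"
  shows "smooth_on S (\<lambda>t. p + t *\<^sub>R q)"
proof -
  define Df :: "real list \<Rightarrow> real \<Rightarrow> 'a" where
    "Df vs = (case vs of [] \<Rightarrow> (\<lambda>t. p + t *\<^sub>R q) | [h] \<Rightarrow> (\<lambda>t. h *\<^sub>R q)
                | _ \<Rightarrow> (\<lambda>t. 0))" for vs
  have "(Df vs has_derivative (\<lambda>h. Df (h # vs) t)) (at t)" for vs t
    by (cases vs; cases "tl vs") (auto simp: Df_def intro!: derivative_eq_intros)
  then show ?thesis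
    unfolding smooth_on_def using assms by (intro conjI exI[of _ Df]) (auto simp: Df_def)
qed

lemma abs_coeff_le_perturbed_orthonormal:
  fixes u w :: "'j \<Rightarrow> 'a::real_inner"
  assumes "finite J" and "k \<in> J"
    and orthonormal: "\<forall>j\<in>J. \<forall>k\<in>J. inner (u j) (u k) = (if j = k then 1 else 0)"
    and "\<forall>j\<in>J. norm (w j) \<le> \<epsilon>"
  shows "\<bar>a k\<bar> \<le> norm (\<Sum>j\<in>J. a j *\<^sub>R (u j + w j)) + (\<Sum>j\<in>J. \<bar>a j\<bar>) * \<epsilon>"
proof -
  let ?s = "\<Sum>j\<in>J. a j *\<^sub>R (u j + w j)"
  have norm_u: "norm (u k) = 1"
    using orthonormal \<open>k \<in> J\<close> by (simp add: norm_eq_sqrt_inner)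
  have "(\<Sum>j\<in>J. a j * inner (u k) (u j)) = (\<Sum>j\<in>J. if j = k then a j else 0)"
    using orthonormal \<open>k \<in> J\<close> by (intro sum.cong) auto
  then have "inner (u k) ?s = a k + (\<Sum>j\<in>J. a j * inner (u k) (w j))"
    using assms(1,2) by (simp add: inner_sum_right inner_add_right sum.distrib algebra_simps)
  moreover have "\<bar>inner (u k) ?s\<bar> \<le> norm ?s"
    using Cauchy_Schwarz_ineq2[of "u k" ?s] norm_u by simp
  moreover have "\<bar>a j * inner (u k) (w j)\<bar> \<le> \<bar>a j\<bar> * \<epsilon>" if "j \<in> J" for j
    using Cauchy_Schwarz_ineq2[of "u k" "w j"] norm_u assms(4) that
    by (auto simp: abs_mult intro!: mult_left_mono)
  then have "\<bar>\<Sum>j\<in>J. a j * inner (u k) (w j)\<bar> \<le> (\<Sum>j\<in>J. \<bar>a j\<bar>) * \<epsilon>"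
    unfolding sum_distrib_right by (blast intro: order_trans[OF sum_abs sum_mono])
  ultimately show ?thesis by linarith
qed

lemma sum_abs_coeffs_le_perturbed_orthonormal:
  fixes u w :: "'j \<Rightarrow> 'a::real_inner"
  assumes "finite J"
    and "\<forall>j\<in>J. \<forall>k\<in>J. inner (u j) (u k) = (if j = k then 1 else 0)"
    and "\<forall>j\<in>J. norm (w j) \<le> \<epsilon>" and "real (card J) * \<epsilon> \<le> 1/2"
  shows "(\<Sum>j\<in>J. \<bar>a j\<bar>) \<le> 2 * real (card J) * norm (\<Sum>j\<in>J. a j *\<^sub>R (u j + w j))"
proof -
  let ?m = "\<Sum>j\<in>J. \<bar>a j\<bar>" and ?N = "norm (\<Sum>j\<in>J. a j *\<^sub>R (u j + w j))"
  have "?m \<le> (\<Sum>k\<in>J. ?N + ?m * \<epsilon>)"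
    using abs_coeff_le_perturbed_orthonormal[OF assms(1) _ assms(2,3)] by (intro sum_mono) auto
  also have "\<dots> = real (card J) * ?N + (real (card J) * \<epsilon>) * ?m"
    by (simp add: algebra_simps)
  also have "\<dots> \<le> real (card J) * ?N + ?m / 2"
    using assms(4) mult_right_mono[OF assms(4), of ?m] by (simp add: sum_nonneg)
  finally show ?thesis by simp
qed

lemma coeff_bounded_family_inj_independent:
  fixes y :: "'j \<Rightarrow> 'a::real_normed_vector"
  assumes "finite J" and bound: "\<And>a. (\<Sum>j\<in>J. \<bar>a j\<bar>) \<le> C * norm (\<Sum>j\<in>J. a j *\<^sub>R y j)"
  shows "inj_on y J" and "independent (y ` J)"
proof -
  have coeff_0: "a k = 0" if "(\<Sum>j\<in>J. a j *\<^sub>R y j) = 0" and "k \<in> J" for a k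
  proof -
    have "\<bar>a k\<bar> \<le> (\<Sum>j\<in>J. \<bar>a j\<bar>)"
      using assms(1) \<open>k \<in> J\<close> by (intro member_le_sum) auto
    also have "\<dots> \<le> 0"
      using bound[of a] that by simp
    finally show ?thesis by simp
  qed
  show inj: "inj_on y J"
  proof (rule inj_onI, rule ccontr)
    fix j k assume "j \<in> J" "k \<in> J" "y j = y k" "j \<noteq> k"
    let ?a = "\<lambda>i. (if i = j then 1 else 0) - (if i = k then 1 else 0 :: real)"
    have "(\<Sum>i\<in>J. ?a i *\<^sub>R y i) = (\<Sum>i\<in>J. (if i = j then y i else 0) - (if i = k then y i else 0))"
      by (intro sum.cong) auto
    also have "\<dots> = y j - y k"
      using \<open>j \<in> J\<close> \<open>k \<in> J\<close> assms(1) by (simp add: sum_subtractf)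
    finally have "(\<Sum>i\<in>J. ?a i *\<^sub>R y i) = 0"
      using \<open>y j = y k\<close> by simp
    then have "?a j = 0"
      using coeff_0[of ?a j] \<open>j \<in> J\<close> by blast
    then show False using \<open>j \<noteq> k\<close> by simp
  qed
  show "independent (y ` J)"
  proof (rule independent_if_scalars_zero)
    fix f z assume "(\<Sum>x\<in>y ` J. f x *\<^sub>R x) = 0" and "z \<in> y ` J"
    then show "f z = 0"
      using coeff_0[of "f \<circ> y"] by (auto simp: sum.reindex[OF inj])
  qed (use assms(1) in simp)
qed

lemma coeff_bounded_family_spans:
  fixes y :: "'j \<Rightarrow> 'a::euclidean_space"
  assumes "finite J" and bound: "\<And>a. (\<Sum>j\<in>J. \<bar>a j\<bar>) \<le> C * norm (\<Sum>j\<in>J. a j *\<^sub>R y j)"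
    and "y ` J \<subseteq> S" and "dim S \<le> card J" and "z \<in> S"
  obtains a where "z = (\<Sum>j\<in>J. a j *\<^sub>R y j)" and "(\<Sum>j\<in>J. \<bar>a j\<bar>) \<le> C * norm z"
proof -
  note inj = coeff_bounded_family_inj_independent(1)[OF assms(1,2)]
  have "S \<subseteq> span (y ` J)"
    using assms(3,4) coeff_bounded_family_inj_independent(2)[OF assms(1,2)] card_image[OF inj]
    by (intro card_ge_dim_independent) auto
  then obtain f where "z = (\<Sum>x\<in>y ` J. f x *\<^sub>R x)"
    using assms(1,5) span_finite[of "y ` J"] by auto
  then have "z = (\<Sum>j\<in>J. f (y j) *\<^sub>R y j)"
    by (simp add: sum.reindex[OF inj])
  with bound[of "f \<circ> y"] show ?thesis
    using that by simp
qed

lemma inner_le_in_low_dim_span_of_perturbed_orthonormal: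
  fixes u w :: "'j \<Rightarrow> 'a::euclidean_space"
  assumes "finite J"
    and orthonormal: "\<forall>j\<in>J. \<forall>k\<in>J. inner (u j) (u k) = (if j = k then 1 else 0)"
    and "\<forall>j\<in>J. inner x (u j) = 0"
    and small: "\<forall>j\<in>J. norm (w j) \<le> \<epsilon>" and "0 \<le> \<epsilon>" and "real (card J) * \<epsilon> \<le> 1/2"
    and "(\<lambda>j. u j + w j) ` J \<subseteq> S" and "dim S \<le> card J" and "z \<in> S"
  shows "\<bar>inner x z\<bar> \<le> 2 * real (card J) * norm z * norm x * \<epsilon>"
proof -
  obtain a where z: "z = (\<Sum>j\<in>J. a j *\<^sub>R (u j + w j))"
    and a: "(\<Sum>j\<in>J. \<bar>a j\<bar>) \<le> 2 * real (card J) * norm z"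
    using coeff_bounded_family_spans[OF assms(1) _ assms(7-9)]
      sum_abs_coeffs_le_perturbed_orthonormal[OF assms(1) orthonormal small assms(6)] by blast
  have "\<bar>inner x (w j)\<bar> \<le> norm x * \<epsilon>" if "j \<in> J" for j
    using Cauchy_Schwarz_ineq2[of x "w j"] mult_left_mono[OF bspec[OF small that] norm_ge_zero[of x]]
    by linarith
  then have "\<bar>a j * inner x (w j)\<bar> \<le> \<bar>a j\<bar> * (norm x * \<epsilon>)" if "j \<in> J" for j
    using that by (simp add: abs_mult mult_left_mono)
  then have "\<bar>\<Sum>j\<in>J. a j * inner x (w j)\<bar> \<le> (\<Sum>j\<in>J. \<bar>a j\<bar>) * (norm x * \<epsilon>)"
    unfolding sum_distrib_right by (blast intro: order_trans[OF sum_abs sum_mono])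
  also have "\<dots> \<le> 2 * real (card J) * norm z * (norm x * \<epsilon>)"
    using a \<open>0 \<le> \<epsilon>\<close> by (simp add: mult_right_mono)
  also have "(\<Sum>j\<in>J. a j * inner x (w j)) = inner x z"
    using assms(3) unfolding z by (simp add: inner_sum_right inner_add_right algebra_simps)
  finally show ?thesis by (simp add: mult_ac)
qed

(* For small t the frame y_j(t) spans S(t), so z(t) = sum_j a_j(t) y_j(t) with a_j(t) = O(t);
   pairing with x leaves only sum_j a_j(t) <x, y_j(t) - y_j(0)> = O(t^2). *)
lemma inner_velocity_eq_0_in_low_dim_moving_span:
  fixes y :: "'j \<Rightarrow> real \<Rightarrow> 'a::euclidean_space" and z :: "real \<Rightarrow> 'a"
  assumes "finite J"
    and y_deriv: "\<forall>j\<in>J. (y j has_vector_derivative y' j) (at 0)"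
    and z_deriv: "(z has_vector_derivative z') (at 0)"
    and orthonormal: "\<forall>j\<in>J. \<forall>k\<in>J. inner (y j 0) (y k 0) = (if j = k then 1 else 0)"
    and "\<forall>j\<in>J. inner x (y j 0) = 0" and "z 0 = 0"
    and "eventually (\<lambda>t. (\<forall>j\<in>J. y j t \<in> S t) \<and> z t \<in> S t \<and> dim (S t) \<le> card J) (at 0)"
  shows "inner x z' = 0"
proof -
  obtain K where "K \<ge> 0" and y_lip: "eventually (\<lambda>t. \<forall>j\<in>J. norm (y j t - y j 0) \<le> K * \<bar>t\<bar>) (at 0)"
    using eventually_uniform_norm_diff_le[OF assms(1) y_deriv] by blast
  let ?Kz = "norm z' + 1"
  have z_lip: "eventually (\<lambda>t. norm (z t) \<le> ?Kz * \<bar>t\<bar>) (at 0)"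
    using has_vector_derivative_imp_eventually_norm_diff_le[OF z_deriv] \<open>z 0 = 0\<close> by simp
  have "((\<lambda>t. real (card J) * (K * \<bar>t\<bar>)) \<longlongrightarrow> 0) (at 0)"
    by (auto intro!: tendsto_eq_intros)
  then have small: "eventually (\<lambda>t. real (card J) * (K * \<bar>t\<bar>) < 1/2) (at 0)"
    by (rule order_tendstoD) simp
  have "eventually (\<lambda>t. \<bar>inner x (z t)\<bar> \<le> (2 * real (card J) * ?Kz * norm x * K) * t\<^sup>2) (at 0)"
    using y_lip z_lip small assms(7)
  proof eventually_elim
    case (elim t)
    let ?w = "\<lambda>j. y j t - y j 0"
    have "\<bar>inner x (z t)\<bar> \<le> 2 * real (card J) * norm (z t) * norm x * (K * \<bar>t\<bar>)"
      by (rule inner_le_in_low_dim_span_of_perturbed_orthonormal[where u = "\<lambda>j. y j 0" and w = ?w and S = "S t"])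
        (use assms(1,5) orthonormal elim \<open>K \<ge> 0\<close> in auto)
    also have "\<dots> \<le> 2 * real (card J) * (?Kz * \<bar>t\<bar>) * norm x * (K * \<bar>t\<bar>)"
      using elim \<open>K \<ge> 0\<close> by (intro mult_right_mono mult_left_mono) auto
    finally show ?case
      by (simp add: power2_eq_square mult_ac)
  qed
  moreover have "((\<lambda>t. inner x (z t)) has_real_derivative inner x z') (at 0)"
    using bounded_linear.has_vector_derivative[OF bounded_linear_inner_right z_deriv]
    by (simp add: has_real_derivative_iff_has_vector_derivative)
  ultimately show ?thesis
    using has_real_derivative_eq_0_if_quadratic_bound \<open>z 0 = 0\<close> by (metis inner_zero_right)
qed

section \<open>Column projections\<close>

lemma matrix_mult_diff_left: "(A - B) ** C = A ** C - B ** (C :: real^'n::finite^'m::finite)"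
  by (simp add: vec_eq_iff matrix_matrix_mult_def left_diff_distrib sum_subtractf)

lemma mult_id_on:
  assumes "mat_on K L U"
  shows "U ** id_on L = U"
proof -
  have "(\<Sum>k\<in>UNIV. U $ i $ k * (if k = j \<and> k \<in> L then 1 else 0))
      = (\<Sum>k\<in>UNIV. if k = j then U $ i $ j else 0)" for i j
    using assms by (intro sum.cong) (auto simp: mat_on_def)
  then show ?thesis
    by (simp add: vec_eq_iff matrix_matrix_mult_def id_on_def)
qed

lemma rank_scaleR:
  fixes A :: "real^'n::finite^'m::finite"
  assumes "c \<noteq> 0"
  shows "rank (c *\<^sub>R A) = rank A"
proof -
  have le: "rank (k *\<^sub>R B) \<le> rank B" for k and B :: "real^'n^'m"
    using rank_mul_le_right[of "k *\<^sub>R mat 1" B] by (simp add: scalar_matrix_assoc[symmetric])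
  show ?thesis
    using le[of c A] le[of "1 / c" "c *\<^sub>R A"] assms by simp
qed

lemma inner_row_column: "inner (row i A) (column j B) = (A ** B) $ i $ j"
  by (simp add: inner_vec_def row_def column_def matrix_matrix_mult_def)

lemma inner_column_column:
  assumes "transpose U ** U = id_on L" and "j \<in> L" and "k \<in> L"
  shows "inner (column j U) (column k U) = (if j = k then 1 else 0)"
proof -
  have "inner (column j U) (column k U) = (transpose U ** U) $ j $ k"
    by (simp add: inner_vec_def column_def matrix_matrix_mult_def transpose_def)
  then show ?thesis
    using assms by (simp add: id_on_def)
qed

definition col_proj :: "real^'n::finite^'m::finite \<Rightarrow> real^'m^'m" where
  "col_proj U = U ** transpose U"

lemma transpose_col_proj: "transpose (col_proj U) = col_proj U"
  by (simp add: col_proj_def matrix_transpose_mul)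

lemma col_proj_mult_self:
  assumes "mat_on K L U" and "transpose U ** U = id_on L"
  shows "col_proj U ** U = U"
  using assms by (simp add: col_proj_def mult_id_on flip: matrix_mul_assoc)

lemma col_proj_complement_mult_self:
  assumes "mat_on K L U" and "transpose U ** U = id_on L"
  shows "(mat 1 - col_proj U) ** U = 0"
  by (simp add: matrix_mult_diff_left col_proj_mult_self[OF assms])

lemma col_proj_mult_col_proj_eq_0:
  assumes "transpose U ** V = 0"
  shows "col_proj U ** col_proj V = 0"
proof -
  have "col_proj U ** col_proj V = U ** ((transpose U ** V) ** transpose V)"
    by (simp add: col_proj_def matrix_mul_assoc)
  then show ?thesis
    using assms by (simp add: vec_eq_iff matrix_matrix_mult_def)
qed

section \<open>Mode products and fibres\<close>

definition mode_prod :: "'d \<Rightarrow> real^'i^'i \<Rightarrow> ('d::finite, 'i::finite) tensor \<Rightarrow> ('d, 'i) tensor" where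
  "mode_prod d M X = (\<chi> f. \<Sum>i\<in>UNIV. M $ f d $ i * X $ f(d := i))"

definition fiber :: "'d \<Rightarrow> ('d::finite, 'i::finite) tensor \<Rightarrow> ('d \<Rightarrow> 'i) \<Rightarrow> real^'i" where
  "fiber d X h = (\<chi> i. X $ h(d := i))"

lemma mode_prod_nth: "mode_prod d M X $ f = (\<Sum>i\<in>UNIV. M $ f d $ i * X $ f(d := i))"
  by (simp add: mode_prod_def)

lemma fiber_nth: "fiber d X h $ i = X $ h(d := i)"
  by (simp add: fiber_def)

lemma mlprod_nth: "mlprod V C $ f = (\<Sum>g\<in>UNIV. C $ g * (\<Prod>d\<in>UNIV. V d $ f d $ g d))"
  by (simp add: mlprod_def)

lemma linear_mode_prod: "linear (mode_prod d M)"
  by (rule linearI)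
    (simp_all add: vec_eq_iff mode_prod_nth distrib_left sum.distrib sum_distrib_left mult.left_commute)

lemmas mode_prod_add = linear_add[OF linear_mode_prod]
  and mode_prod_diff = linear_diff[OF linear_mode_prod]
  and mode_prod_0 = linear_0[OF linear_mode_prod]

lemma mode_prod_mat_1: "mode_prod d (mat 1) X = X"
proof -
  have "(\<Sum>i\<in>UNIV. mat 1 $ f d $ i * X $ f(d := i)) = (\<Sum>i\<in>UNIV. if f d = i then X $ f(d := i) else 0)" for f
    by (intro sum.cong) (auto simp: mat_def)
  then show ?thesis
    by (simp add: vec_eq_iff mode_prod_nth)
qed

lemma mode_prod_0_left: "mode_prod d 0 X = 0"
  by (simp add: vec_eq_iff mode_prod_nth)

lemma mode_prod_diff_left: "mode_prod d (M - N) X = mode_prod d M X - mode_prod d N X"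
  by (simp add: vec_eq_iff mode_prod_nth left_diff_distrib sum_subtractf)

lemma mode_prod_complement: "mode_prod d (mat 1 - M) X = X - mode_prod d M X"
  by (simp add: mode_prod_diff_left mode_prod_mat_1)

lemma mode_prod_scaleR_left: "mode_prod d (c *\<^sub>R M) X = c *\<^sub>R mode_prod d M X"
  by (simp add: vec_eq_iff mode_prod_nth sum_distrib_left mult.assoc)

lemma mode_prod_mode_prod: "mode_prod d M (mode_prod d N X) = mode_prod d (M ** N) X"
proof -
  have "(\<Sum>i\<in>UNIV. M $ f d $ i * (\<Sum>k\<in>UNIV. N $ i $ k * X $ f(d := k)))
      = (\<Sum>k\<in>UNIV. (\<Sum>i\<in>UNIV. M $ f d $ i * N $ i $ k) * X $ f(d := k))" for f
  proof -
    have "(\<Sum>i\<in>UNIV. M $ f d $ i * (\<Sum>k\<in>UNIV. N $ i $ k * X $ f(d := k)))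
        = (\<Sum>i\<in>UNIV. \<Sum>k\<in>UNIV. M $ f d $ i * N $ i $ k * X $ f(d := k))"
      by (simp add: sum_distrib_left mult.assoc)
    also have "\<dots> = (\<Sum>k\<in>UNIV. (\<Sum>i\<in>UNIV. M $ f d $ i * N $ i $ k) * X $ f(d := k))"
      by (subst sum.swap) (simp add: sum_distrib_right)
    finally show ?thesis .
  qed
  then show ?thesis
    by (simp add: vec_eq_iff mode_prod_nth matrix_matrix_mult_def)
qed

lemma mode_prod_commute:
  assumes "d \<noteq> d'"
  shows "mode_prod d M (mode_prod d' N X) = mode_prod d' N (mode_prod d M X)"
proof -
  have "(\<Sum>i\<in>UNIV. M $ f d $ i * (\<Sum>k\<in>UNIV. N $ f d' $ k * X $ f(d := i, d' := k)))
      = (\<Sum>k\<in>UNIV. N $ f d' $ k * (\<Sum>i\<in>UNIV. M $ f d $ i * X $ f(d' := k, d := i)))" for f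
  proof -
    have "(\<Sum>i\<in>UNIV. M $ f d $ i * (\<Sum>k\<in>UNIV. N $ f d' $ k * X $ f(d := i, d' := k)))
        = (\<Sum>i\<in>UNIV. \<Sum>k\<in>UNIV. N $ f d' $ k * (M $ f d $ i * X $ f(d' := k, d := i)))"
      using assms by (simp add: sum_distrib_left mult.left_commute fun_upd_twist)
    also have "\<dots> = (\<Sum>k\<in>UNIV. N $ f d' $ k * (\<Sum>i\<in>UNIV. M $ f d $ i * X $ f(d' := k, d := i)))"
      by (subst sum.swap) (simp add: sum_distrib_left)
    finally show ?thesis .
  qed
  then show ?thesis
    using assms by (simp add: vec_eq_iff mode_prod_nth)
qed

lemma inner_mode_prod: "inner (mode_prod d M X) Y = inner X (mode_prod d (transpose M) Y)"
proof -
  have "inner (mode_prod d M X) Y = (\<Sum>(f, i)\<in>UNIV. M $ f d $ i * X $ f(d := i) * Y $ f)"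
    by (simp add: inner_vec_def mode_prod_nth sum_distrib_right sum.cartesian_product)
  also have "\<dots> = (\<Sum>(g, k)\<in>UNIV. X $ g * (M $ k $ g d * Y $ g(d := k)))"
    by (rule sum.reindex_bij_witness[of _ "\<lambda>(f, i). (f(d := i), f d)" "\<lambda>(f, i). (f(d := i), f d)"]) auto
  also have "\<dots> = inner X (mode_prod d (transpose M) Y)"
    by (simp add: inner_vec_def mode_prod_nth sum_distrib_left sum.cartesian_product transpose_def)
  finally show ?thesis .
qed

lemma mode_prod_mlprod: "mode_prod d M (mlprod V C) = mlprod (V(d := M ** V d)) C"
proof -
  define rest where "rest f g = (\<Prod>e\<in>UNIV - {d}. V e $ f e $ g e)" for f g
  have split: "(\<Prod>e\<in>UNIV. W e $ f e $ g e) = W d $ f d $ g d * rest f g"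
    if "\<forall>e. e \<noteq> d \<longrightarrow> W e = V e" for W f g
    using that unfolding rest_def by (subst prod.remove[where x = d]) (auto intro!: prod.cong)
  have "(\<Sum>i\<in>UNIV. M $ f d $ i * (\<Sum>g\<in>UNIV. C $ g * (\<Prod>e\<in>UNIV. V e $ (f(d := i)) e $ g e)))
      = (\<Sum>g\<in>UNIV. C $ g * (\<Prod>e\<in>UNIV. (V(d := M ** V d)) e $ f e $ g e))" for f
  proof -
    have "(\<Prod>e\<in>UNIV. V e $ (f(d := i)) e $ g e) = V d $ i $ g d * rest f g" for i g
      using split[of V "f(d := i)" g] by (simp add: rest_def)
    then have "(\<Sum>i\<in>UNIV. M $ f d $ i * (\<Sum>g\<in>UNIV. C $ g * (\<Prod>e\<in>UNIV. V e $ (f(d := i)) e $ g e)))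
        = (\<Sum>i\<in>UNIV. \<Sum>g\<in>UNIV. C $ g * (M $ f d $ i * V d $ i $ g d) * rest f g)"
      by (simp add: sum_distrib_left mult_ac)
    also have "\<dots> = (\<Sum>g\<in>UNIV. C $ g * ((M ** V d) $ f d $ g d * rest f g))"
      by (subst sum.swap) (simp add: matrix_matrix_mult_def sum_distrib_left sum_distrib_right mult_ac)
    also have "\<dots> = (\<Sum>g\<in>UNIV. C $ g * (\<Prod>e\<in>UNIV. (V(d := M ** V d)) e $ f e $ g e))"
      using split[of "V(d := M ** V d)" f] by simp
    finally show ?thesis .
  qed
  then show ?thesis
    by (simp add: vec_eq_iff mode_prod_nth mlprod_nth)
qed

lemma mlprod_eq_0_if_factor_eq_0: "V d = 0 \<Longrightarrow> mlprod V C = 0"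
  by (simp add: vec_eq_iff mlprod_nth prod.remove[where x = d])

lemma linear_fiber: "linear (\<lambda>X. fiber d X h)"
  by (rule linearI) (simp_all add: vec_eq_iff fiber_nth)

lemma fiber_mlprod:
  "fiber d (mlprod V C) h = (\<Sum>g\<in>UNIV. (C $ g * (\<Prod>e\<in>UNIV - {d}. V e $ h e $ g e)) *\<^sub>R column (g d) (V d))"
proof -
  have "(\<Prod>e\<in>UNIV. V e $ (h(d := i)) e $ g e) = V d $ i $ g d * (\<Prod>e\<in>UNIV - {d}. V e $ h e $ g e)" for i g
    by (subst prod.remove[where x = d]) (auto intro!: prod.cong)
  then show ?thesis
    by (simp add: vec_eq_iff fiber_nth mlprod_nth sum_component column_def mult_ac)
qed

lemma dim_fibers_mlprod_le:
  assumes "mat_on K L (V d)"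
  shows "dim (range (fiber d (mlprod V C))) \<le> card L"
proof -
  have "column j (V d) \<in> span ((\<lambda>k. column k (V d)) ` L)" for j
  proof (cases "j \<in> L")
    case False
    then have "column j (V d) = 0"
      using assms by (auto simp: mat_on_def column_def vec_eq_iff)
    then show ?thesis by (simp add: span_zero)
  qed (simp add: span_base)
  then have "range (fiber d (mlprod V C)) \<subseteq> span ((\<lambda>k. column k (V d)) ` L)"
    unfolding fiber_mlprod by (auto intro!: span_sum span_scale)
  then have "dim (range (fiber d (mlprod V C))) \<le> card ((\<lambda>k. column k (V d)) ` L)"
    by (metis dim_le_card dim_span finite finite_imageI span_superset subset_trans)
  also have "\<dots> \<le> card L"
    by (rule card_image_le) simp
  finally show ?thesis .
qed

lemma unfold_gram_mult_vec:
  "unfold_gram X d *v u = (\<Sum>h\<in>{h. h d = c}. inner (fiber d X h) u *\<^sub>R fiber d X h)"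
proof -
  have "(\<Sum>k\<in>UNIV. (\<Sum>g\<in>{g. g d = i}. X $ g * X $ g(d := k)) * u $ k)
      = (\<Sum>h\<in>{h. h d = c}. inner (fiber d X h) u * X $ h(d := i))" for i
  proof -
    have "(\<Sum>k\<in>UNIV. (\<Sum>g\<in>{g. g d = i}. X $ g * X $ g(d := k)) * u $ k)
        = (\<Sum>g\<in>{g. g d = i}. \<Sum>k\<in>UNIV. X $ g * (X $ g(d := k) * u $ k))"
      by (subst sum.swap) (simp add: sum_distrib_right mult.assoc)
    also have "\<dots> = (\<Sum>g\<in>{g. g d = i}. X $ g * inner (fiber d X g) u)"
      by (simp add: sum_distrib_left inner_vec_def fiber_nth)
    also have "\<dots> = (\<Sum>h\<in>{h. h d = c}. inner (fiber d X h) u * X $ h(d := i))"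
      by (rule sum.reindex_bij_witness[of _ "\<lambda>h. h(d := i)" "\<lambda>g. g(d := c)"])
        (auto simp: fiber_def)
    finally show ?thesis .
  qed
  then show ?thesis
    by (simp add: vec_eq_iff unfold_gram_def matrix_vector_mult_def sum_component fiber_nth)
qed

lemma fiber_mode_prod_other_mode:
  assumes "d \<noteq> d'"
  shows "fiber d (mode_prod d' M X) f = (\<Sum>k\<in>UNIV. M $ f d' $ k *\<^sub>R fiber d X (f(d' := k)))"
  using assms by (simp add: vec_eq_iff fiber_nth mode_prod_nth sum_component fun_upd_twist)

lemma mode_prod_nth_eq_inner_fiber: "mode_prod d M X $ f = inner (row (f d) M) (fiber d X f)"
  by (simp add: mode_prod_nth inner_vec_def fiber_nth row_def)

section \<open>Orthogonality of Tucker tangent envelopes\<close>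

(* Contains the tangent vectors (U_1,...,U_D) . C' + sum_d (U_1,...,U_d',...,U_D) . C of the
   Tucker manifold at (U_1,...,U_D) . C. *)
definition tucker_tangent_envelope :: "('d::finite \<Rightarrow> real^'i::finite^'i) \<Rightarrow> ('d, 'i) tensor set" where
  "tucker_tangent_envelope U =
     {X. \<forall>d d'. d \<noteq> d' \<longrightarrow>
        mode_prod d (mat 1 - col_proj (U d)) (mode_prod d' (mat 1 - col_proj (U d')) X) = 0}"

lemma tucker_tangent_envelope_decomp:
  assumes "X \<in> tucker_tangent_envelope U" and "d \<noteq> d'"
  shows "X = mode_prod d (col_proj (U d)) X + mode_prod d' (col_proj (U d')) X
             - mode_prod d (col_proj (U d)) (mode_prod d' (col_proj (U d')) X)"
  using assms by (auto simp: tucker_tangent_envelope_def mode_prod_complement mode_prod_diff algebra_simps)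

lemma inner_double_col_proj_envelope_eq_0:
  assumes "d \<noteq> d'" and orth: "\<forall>e. transpose (U e) ** V e = 0" and "W \<in> tucker_tangent_envelope V"
  shows "inner (mode_prod d (col_proj (U d)) (mode_prod d' (col_proj (U d')) X)) W = 0"
proof -
  let ?P = "\<lambda>e. mode_prod e (col_proj (U e))" and ?Q = "\<lambda>e. mode_prod e (mat 1 - col_proj (V e))"
  have absorb: "?P e (?Q e Z) = ?P e Z" for e Z
    using col_proj_mult_col_proj_eq_0[OF orth[rule_format, of e]]
    by (simp add: mode_prod_complement mode_prod_diff mode_prod_mode_prod mode_prod_0_left)
  have "inner (?P d (?P d' X)) W = inner X (?P d' (?P d W))"
    by (simp add: inner_mode_prod transpose_col_proj)
  also have "?P d' (?P d W) = ?P d' (?Q d' (?P d (?Q d W)))"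
    by (simp add: absorb)
  also have "\<dots> = ?P d' (?P d (?Q d' (?Q d W)))"
    using assms(1) by (simp add: mode_prod_commute)
  also have "?Q d' (?Q d W) = 0"
    using assms(1,3) by (simp add: tucker_tangent_envelope_def)
  finally show ?thesis
    by (simp add: mode_prod_0)
qed

lemma tucker_tangent_envelopes_orthogonal:
  fixes U V :: "'d::finite \<Rightarrow> real^'i::finite^'i" and a b c :: 'd
  assumes "a \<noteq> b" "a \<noteq> c" "b \<noteq> c" and orth: "\<forall>e. transpose (U e) ** V e = 0"
    and X: "X \<in> tucker_tangent_envelope U" and Y: "Y \<in> tucker_tangent_envelope V"
  shows "inner X Y = 0"
proof -
  let ?P = "\<lambda>e. mode_prod e (col_proj (U e))"
  have double: "inner (?P e (?P e' Z)) Y = 0" if "e \<noteq> e'" for e e' Z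
    by (rule inner_double_col_proj_envelope_eq_0[OF that orth Y])
  have single: "inner (?P e X) Y = 0" if "e \<noteq> e'" "e \<noteq> e''" "e' \<noteq> e''" for e e' e''
  proof -
    have "?P e X = ?P e (?P e' X) + ?P e (?P e'' X) - ?P e (?P e' (?P e'' X))"
      by (subst tucker_tangent_envelope_decomp[OF X \<open>e' \<noteq> e''\<close>]) (simp add: mode_prod_add mode_prod_diff)
    then show ?thesis
      using that by (simp add: inner_add_left inner_diff_left double)
  qed
  have "inner X Y = inner (?P a X) Y + inner (?P b X) Y - inner (?P a (?P b X)) Y"
    by (subst tucker_tangent_envelope_decomp[OF X \<open>a \<noteq> b\<close>]) (simp add: inner_add_left inner_diff_left)
  then show ?thesis
    using assms(1-3) single[of a b c] single[of b a c] double[of a b] by simp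
qed

section \<open>Tangent spaces and the condition number\<close>

lemma dim_fibers_structured_tucker_le:
  assumes "X \<in> structured_tucker M L I"
  shows "dim (range (fiber d X)) \<le> card (L d)"
proof -
  obtain V C where X: "X = mlprod V C" and "full_rank_mat (I d) (L d) (V d)"
    using assms unfolding structured_tucker_def by blast
  then have "mat_on (I d) (L d) (V d)"
    by (simp add: full_rank_mat_def)
  then show ?thesis
    unfolding X by (rule dim_fibers_mlprod_le)
qed

lemma compact_hosvd_gram_eigenvector:
  assumes "compact_hosvd I L U C A" and "j \<in> L d"
  shows "\<exists>s>0. (\<Sum>h\<in>{h. h d = c}. inner (fiber d A h) (column j (U d)) *\<^sub>R fiber d A h)
                = s *\<^sub>R column j (U d)"
  using assms unfolding compact_hosvd_def unfold_gram_mult_vec[of A d _ c, symmetric] by blast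

lemma compact_hosvd_complement_mult_eq_0:
  assumes "compact_hosvd I L U C A"
  shows "(mat 1 - col_proj (U d)) ** U d = 0"
  using assms unfolding compact_hosvd_def by (blast intro: col_proj_complement_mult_self)

lemma mode_prod_complement_compact_hosvd:
  assumes "compact_hosvd I L U C A"
  shows "mode_prod d (mat 1 - col_proj (U d)) A = 0"
proof -
  have "A = mlprod U C"
    using assms unfolding compact_hosvd_def by blast
  then have "mode_prod d (mat 1 - col_proj (U d)) A = mlprod (U(d := (mat 1 - col_proj (U d)) ** U d)) C"
    by (simp add: mode_prod_mlprod)
  then show ?thesis
    using compact_hosvd_complement_mult_eq_0[OF assms] by (simp add: mlprod_eq_0_if_factor_eq_0[of _ d])
qed

lemma tucker_curve_velocity_double_complement_nth_eq_0:
  fixes d d' :: "'d::finite" and f :: "'d \<Rightarrow> 'i::finite"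
  assumes hosvd: "compact_hosvd I L U C A" and "d \<noteq> d'"
    and curve: "eventually (\<lambda>t. \<gamma> t \<in> structured_tucker M L I) (at 0)" and "\<gamma> 0 = A"
    and \<gamma>_deriv: "(\<gamma> has_vector_derivative v) (at 0)"
  shows "mode_prod d (mat 1 - col_proj (U d)) (mode_prod d' (mat 1 - col_proj (U d')) v) $ f = 0"
proof -
  let ?Q = "\<lambda>e. mat 1 - col_proj (U e)"
  have "\<forall>j\<in>L d. \<exists>s>0.
      (\<Sum>h\<in>{h. h d = f d}. inner (fiber d A h) (column j (U d)) *\<^sub>R fiber d A h) = s *\<^sub>R column j (U d)"
    using compact_hosvd_gram_eigenvector[OF hosvd] by blast
  then obtain s where s: "\<forall>j\<in>L d. s j > 0 \<and>
      (\<Sum>h\<in>{h. h d = f d}. inner (fiber d A h) (column j (U d)) *\<^sub>R fiber d A h) = s j *\<^sub>R column j (U d)"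
    by (rule bchoice[THEN exE])
  \<comment> \<open>\<Psi> j X = (1 / s_j) X_(d) A_(d)^T u_j is linear in the fibres of X and equals u_j at X = A.\<close>
  define \<Psi> where
    "\<Psi> j X = (1 / s j) *\<^sub>R (\<Sum>h\<in>{h. h d = f d}. inner (fiber d A h) (column j (U d)) *\<^sub>R fiber d X h)"
    for j X
  define \<Phi> where "\<Phi> X = fiber d (mode_prod d' (?Q d') X) f" for X
  have \<Psi>_A: "\<Psi> j A = column j (U d)" if "j \<in> L d" for j
    using s[rule_format, OF that] by (simp add: \<Psi>_def)
  have "inner (row (f d) (?Q d)) (\<Phi> v) = 0"
  proof (rule inner_velocity_eq_0_in_low_dim_moving_span
      [where y = "\<lambda>j t. \<Psi> j (\<gamma> t)" and z = "\<lambda>t. \<Phi> (\<gamma> t)" and J = "L d"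
        and S = "\<lambda>t. span (range (fiber d (\<gamma> t)))"])
    have "linear (\<Psi> j)" for j
      unfolding \<Psi>_def by (intro linear_compose_scale_right linear_compose_sum ballI linear_fiber)
    then show "\<forall>j\<in>L d. ((\<lambda>t. \<Psi> j (\<gamma> t)) has_vector_derivative \<Psi> j v) (at 0)"
      using \<gamma>_deriv linear_has_vector_derivative by blast
    have "linear \<Phi>"
      unfolding \<Phi>_def using linear_compose[OF linear_mode_prod linear_fiber] by (simp add: comp_def)
    then show "((\<lambda>t. \<Phi> (\<gamma> t)) has_vector_derivative \<Phi> v) (at 0)"
      using \<gamma>_deriv by (rule linear_has_vector_derivative)
    have "transpose (U d) ** U d = id_on (L d)"
      using hosvd unfolding compact_hosvd_def by blast
    then show "\<forall>j\<in>L d. \<forall>k\<in>L d. inner (\<Psi> j (\<gamma> 0)) (\<Psi> k (\<gamma> 0)) = (if j = k then 1 else 0)"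
      using \<Psi>_A inner_column_column[of "U d" "L d"] by (simp add: \<open>\<gamma> 0 = A\<close>)
    show "\<forall>j\<in>L d. inner (row (f d) (?Q d)) (\<Psi> j (\<gamma> 0)) = 0"
      using \<Psi>_A compact_hosvd_complement_mult_eq_0[OF hosvd] by (simp add: \<open>\<gamma> 0 = A\<close> inner_row_column)
    show "\<Phi> (\<gamma> 0) = 0"
      using mode_prod_complement_compact_hosvd[OF hosvd] by (simp add: \<Phi>_def \<open>\<gamma> 0 = A\<close> fiber_def vec_eq_iff)
    show "eventually (\<lambda>t. (\<forall>j\<in>L d. \<Psi> j (\<gamma> t) \<in> span (range (fiber d (\<gamma> t))))
        \<and> \<Phi> (\<gamma> t) \<in> span (range (fiber d (\<gamma> t)))
        \<and> dim (span (range (fiber d (\<gamma> t)))) \<le> card (L d)) (at 0)"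
      using curve
    proof eventually_elim
      case (elim t)
      have "\<Psi> j (\<gamma> t) \<in> span (range (fiber d (\<gamma> t)))" for j
        unfolding \<Psi>_def by (intro span_scale span_sum span_base) auto
      moreover have "\<Phi> (\<gamma> t) \<in> span (range (fiber d (\<gamma> t)))"
        unfolding \<Phi>_def fiber_mode_prod_other_mode[OF \<open>d \<noteq> d'\<close>]
        by (intro span_sum span_scale span_base) auto
      moreover have "dim (span (range (fiber d (\<gamma> t)))) \<le> card (L d)"
        using elim by (simp add: dim_fibers_structured_tucker_le)
      ultimately show ?case by blast
    qed
  qed simp
  then show ?thesis
    unfolding \<Phi>_def by (simp only: mode_prod_nth_eq_inner_fiber)
qed

lemma tangent_space_subset_tucker_tangent_envelope:
  assumes "compact_hosvd I L U C A"
  shows "tangent_space (structured_tucker M L I) A \<subseteq> tucker_tangent_envelope U"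
proof
  fix v assume "v \<in> tangent_space (structured_tucker M L I) A"
  then obtain \<gamma> e where "e > 0" and "\<gamma> ` {-e<..<e} \<subseteq> structured_tucker M L I"
    and "\<gamma> 0 = A" and "(\<gamma> has_vector_derivative v) (at 0)"
    unfolding tangent_space_def by blast
  moreover from this have "eventually (\<lambda>t. \<gamma> t \<in> structured_tucker M L I) (at 0)"
    unfolding eventually_at dist_real_def by (auto simp: abs_less_iff intro!: exI[of _ e])
  ultimately have "mode_prod d (mat 1 - col_proj (U d)) (mode_prod d' (mat 1 - col_proj (U d')) v) $ f = 0"
    if "d \<noteq> d'" for d d' f
    using tucker_curve_velocity_double_complement_nth_eq_0[OF assms that] by blast
  then show "v \<in> tucker_tangent_envelope U"
    unfolding tucker_tangent_envelope_def by (simp add: vec_eq_iff)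
qed

lemma scaleR_mem_structured_tucker:
  assumes "X \<in> structured_tucker M L I" and "k \<noteq> 0"
  shows "k *\<^sub>R X \<in> structured_tucker M L I"
proof -
  obtain V C where X: "X = mlprod V C" and "C \<in> M" and V: "\<forall>d. full_rank_mat (I d) (L d) (V d)"
    using assms(1) unfolding structured_tucker_def by blast
  fix d
  have "k *\<^sub>R X = mode_prod d (k *\<^sub>R mat 1) X"
    by (simp add: mode_prod_scaleR_left mode_prod_mat_1)
  also have "\<dots> = mlprod (V(d := k *\<^sub>R V d)) C"
    unfolding X mode_prod_mlprod by (simp add: scalar_matrix_assoc[symmetric])
  finally have "k *\<^sub>R X = mlprod (V(d := k *\<^sub>R V d)) C" .
  moreover have "\<forall>e. full_rank_mat (I e) (L e) ((V(d := k *\<^sub>R V d)) e)"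
    using V assms(2) by (auto simp: full_rank_mat_def mat_on_def rank_scaleR)
  ultimately show ?thesis
    using \<open>C \<in> M\<close> unfolding structured_tucker_def by blast
qed

lemma scaleR_mem_tangent_space:
  assumes "X \<in> structured_tucker M L I"
  shows "c *\<^sub>R X \<in> tangent_space (structured_tucker M L I) X"
proof -
  define e where "e = 1 / (\<bar>c\<bar> + 1)"
  have "e > 0" by (simp add: e_def add_nonneg_pos)
  have "X + t *\<^sub>R (c *\<^sub>R X) \<in> structured_tucker M L I" if "t \<in> {-e<..<e}" for t
  proof -
    have "\<bar>t\<bar> < 1 / (\<bar>c\<bar> + 1)"
      using that by (auto simp: e_def)
    then have "\<bar>t\<bar> * (\<bar>c\<bar> + 1) < 1"
      by (simp add: pos_less_divide_eq[of "\<bar>c\<bar> + 1"] add_nonneg_pos)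
    then have "\<bar>t * c\<bar> < 1"
      by (simp add: abs_mult algebra_simps)
    then have "1 + t * c \<noteq> 0" by linarith
    moreover have "X + t *\<^sub>R (c *\<^sub>R X) = (1 + t * c) *\<^sub>R X"
      by (simp add: algebra_simps)
    ultimately show ?thesis
      using scaleR_mem_structured_tucker[OF assms] by simp
  qed
  moreover have "((\<lambda>t. X + t *\<^sub>R (c *\<^sub>R X)) has_vector_derivative c *\<^sub>R X) (at 0)"
    by (auto intro!: derivative_eq_intros)
  ultimately show ?thesis
    unfolding tangent_space_def using \<open>e > 0\<close> smooth_on_line[of "{-e<..<e}" X "c *\<^sub>R X"]
    by (intro CollectI exI[of _ "\<lambda>t. X + t *\<^sub>R (c *\<^sub>R X)"] exI[of _ e]) auto
qed

lemma compact_hosvd_nonzero: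
  assumes "compact_hosvd I L U C A" and "L d \<noteq> {}"
  shows "A \<noteq> 0"
proof
  assume "A = 0"
  obtain j where "j \<in> L d" using assms(2) by auto
  then obtain s where "unfold_gram A d *v column j (U d) = s *\<^sub>R column j (U d)" and "s > 0"
    using assms(1) unfolding compact_hosvd_def by blast
  moreover have "unfold_gram A d = 0"
    using \<open>A = 0\<close> by (simp add: unfold_gram_def vec_eq_iff)
  ultimately have "column j (U d) = 0" by simp
  moreover have "transpose (U d) ** U d = id_on (L d)"
    using assms(1) unfolding compact_hosvd_def by blast
  ultimately show False
    using inner_column_column[of "U d" "L d" j j] \<open>j \<in> L d\<close> by simp
qed

lemma terracini_sigma_min_eq_1_if_orthogonal:
  assumes "r0 < R" and "u \<in> TS r0" and "norm u = 1" and "\<forall>r<R. 0 \<in> TS r"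
    and orth: "\<forall>r1<R. \<forall>r2<R. r1 \<noteq> r2 \<longrightarrow> (\<forall>v1\<in>TS r1. \<forall>v2\<in>TS r2. inner v1 v2 = 0)"
  shows "terracini_sigma_min R TS = 1"
proof -
  let ?S = "{norm (\<Sum>r<R. v r) | v. (\<forall>r<R. v r \<in> TS r) \<and> (\<Sum>r<R. (norm (v r))\<^sup>2) = 1}"
  have "?S = {1}"
  proof (intro set_eqI iffI)
    fix x assume "x \<in> ?S"
    then obtain v where x: "x = norm (\<Sum>r<R. v r)" and "\<forall>r<R. v r \<in> TS r"
      and "(\<Sum>r<R. (norm (v r))\<^sup>2) = 1" by blast
    moreover have "pairwise (\<lambda>r1 r2. orthogonal (v r1) (v r2)) {..<R}"
      using orth \<open>\<forall>r<R. v r \<in> TS r\<close> by (auto simp: pairwise_def orthogonal_def)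
    ultimately have "x\<^sup>2 = 1"
      by (simp add: norm_sum_Pythagorean)
    moreover have "x \<ge> 0"
      using x by simp
    ultimately show "x \<in> {1}"
      by (auto simp: power2_eq_1_iff)
  next
    fix x :: real assume "x \<in> {1}"
    let ?v = "\<lambda>r. if r = r0 then u else 0"
    have "(\<Sum>r<R. (norm (?v r))\<^sup>2) = (\<Sum>r<R. if r = r0 then 1 else 0)"
      using assms(3) by (intro sum.cong) auto
    then have "(\<Sum>r<R. ?v r) = u" and "(\<Sum>r<R. (norm (?v r))\<^sup>2) = 1"
      using assms(1) by simp_all
    moreover have "\<forall>r<R. ?v r \<in> TS r"
      using assms(2,4) by simp
    ultimately show "x \<in> ?S"
      using \<open>x \<in> {1}\<close> assms(3) by (intro CollectI exI[of _ ?v]) auto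
  qed
  then show ?thesis
    unfolding terracini_sigma_min_def by simp
qed

theorem proposition4p2:
  fixes R :: nat
    and I :: "'d::finite \<Rightarrow> 'i::finite set"
    and L :: "nat \<Rightarrow> 'd \<Rightarrow> 'i set"
    and Ms :: "nat \<Rightarrow> ('d, 'i) tensor set"
    and A C :: "nat \<Rightarrow> ('d, 'i) tensor"
    and U :: "nat \<Rightarrow> 'd \<Rightarrow> real^'i^'i"
  assumes "CARD('d) \<ge> 3"
    and "R \<ge> 1"
    and "\<forall>r<R. \<forall>d. L r d \<noteq> {}"
    and "\<forall>r<R. tucker_core_structure (L r) (Ms r)"
    and "\<forall>r<R. A r \<in> structured_tucker (Ms r) (L r) I"
    and "\<forall>r<R. compact_hosvd I (L r) (U r) (C r) (A r)"
    and "\<forall>r1<R. \<forall>r2<R. r1 \<noteq> r2 \<longrightarrow> (\<forall>d. transpose (U r1 d) ** U r2 d = 0)"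
  shows "kappa_sbtd R (\<lambda>r. tangent_space (structured_tucker (Ms r) (L r) I) (A r)) = 1"
proof -
  let ?TS = "\<lambda>r. tangent_space (structured_tucker (Ms r) (L r) I) (A r)"
  obtain T :: "'d set" where "card T = 3"
    using obtain_subset_with_card_n[OF assms(1)] by metis
  then obtain a b c :: 'd where "a \<noteq> b" "a \<noteq> c" "b \<noteq> c"
    unfolding card_3_iff by blast
  have "0 < R"
    using assms(2) by simp
  have "A 0 \<noteq> 0"
    using compact_hosvd_nonzero[OF assms(6)[rule_format, OF \<open>0 < R\<close>]] assms(3) \<open>0 < R\<close> by blast
  have scaled: "k *\<^sub>R A r \<in> ?TS r" if "r < R" for k r
    using assms(5) that by (simp add: scaleR_mem_tangent_space)
  have "terracini_sigma_min R ?TS = 1"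
  proof (rule terracini_sigma_min_eq_1_if_orthogonal)
    show "(1 / norm (A 0)) *\<^sub>R A 0 \<in> ?TS 0" and "\<forall>r<R. 0 \<in> ?TS r"
      using scaled[of 0] scaled[of _ 0] \<open>0 < R\<close> by auto
    show "norm ((1 / norm (A 0)) *\<^sub>R A 0) = 1"
      using \<open>A 0 \<noteq> 0\<close> by simp
    show "\<forall>r1<R. \<forall>r2<R. r1 \<noteq> r2 \<longrightarrow> (\<forall>v1\<in>?TS r1. \<forall>v2\<in>?TS r2. inner v1 v2 = 0)"
      using tucker_tangent_envelopes_orthogonal[OF \<open>a \<noteq> b\<close> \<open>a \<noteq> c\<close> \<open>b \<noteq> c\<close>]
        tangent_space_subset_tucker_tangent_envelope assms(6,7) by blast
  qed (rule \<open>0 < R\<close>)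
  then show ?thesis
    by (simp add: kappa_sbtd_def one_ereal_def)
qed

end
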